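(* Let $X_1,\dots,X_n$ be i.i.d. copies of a non-negative absolutely continuous random variable $X$. Let $\tau_{1|n}(\mathbf X)=\max\{X_1,\dots,X_n\}$ (parallel system), $(\tau_{1|n}(\mathbf X))_t=(\tau_{1|n}(\mathbf X)-t\mid\tau_{1|n}(\mathbf X)>t)$, and $\tau_{1|n}(\mathbf X_t)$ the lifetime of the parallel system built from $n$ independent used components with lifetimes distributed as $(X_i-t\mid X_i>t)$. Then for any fixed $t\ge0$, $\tau_{1|n}(\mathbf X_t)\underset{b}{\prec}(\tau_{1|n}(\mathbf X))_t$.
   Context: All random variables are non-negative and absolutely continuous with support $[0,\infty)$. For a random variable $W$: density $f_W$, cdf $F_W$, reversed hazard rate $\tilde r_W=f_W/F_W$. $U\underset{b}{\prec}V$ means $\tilde r_U(x)/\tilde r_V(x)$ is decreasing (non-increasing) in $x\ge0$. *)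

theory Defs
  imports "HOL-Analysis.Analysis"
begin

text \<open>A lifetime distribution is described by its cdf G and a density g
  (functions on the reals, vanishing on the negative half-line).\<close>

definition is_density :: "(real \<Rightarrow> real) \<Rightarrow> (real \<Rightarrow> real) \<Rightarrow> bool" where
  "is_density g G \<longleftrightarrow> (\<forall>x. 0 \<le> g x) \<and> (\<forall>x. (g has_integral G x) {..x})"

definition rhr :: "(real \<Rightarrow> real) \<Rightarrow> (real \<Rightarrow> real) \<Rightarrow> real \<Rightarrow> real" where
  "rhr g G x = g x / G x"

text \<open>U \<prec>_b V: the ratio of reversed hazard rates r_U / r_V is non-increasing.
  Both cdfs vanish at 0, so the ratio is only meaningful for x > 0.\<close>
definition rh_ratio_order ::
  "(real \<Rightarrow> real) \<Rightarrow> (real \<Rightarrow> real) \<Rightarrow> (real \<Rightarrow> real) \<Rightarrow> (real \<Rightarrow> real) \<Rightarrow> bool" where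
  "rh_ratio_order gU GU gV GV \<longleftrightarrow>
     (\<forall>x y. 0 < x \<longrightarrow> x \<le> y \<longrightarrow> rhr gU GU y / rhr gV GV y \<le> rhr gU GU x / rhr gV GV x)"

definition par_cdf :: "(real \<Rightarrow> real) \<Rightarrow> nat \<Rightarrow> real \<Rightarrow> real" where
  "par_cdf G n x = G x ^ n"

definition par_pdf :: "(real \<Rightarrow> real) \<Rightarrow> (real \<Rightarrow> real) \<Rightarrow> nat \<Rightarrow> real \<Rightarrow> real" where
  "par_pdf g G n x = real n * G x ^ (n - 1) * g x"

definition residual_cdf :: "(real \<Rightarrow> real) \<Rightarrow> real \<Rightarrow> real \<Rightarrow> real" where
  "residual_cdf G t x = (if x < 0 then 0 else (G (t + x) - G t) / (1 - G t))"

definition residual_pdf :: "(real \<Rightarrow> real) \<Rightarrow> (real \<Rightarrow> real) \<Rightarrow> real \<Rightarrow> real \<Rightarrow> real" where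
  "residual_pdf g G t x = (if x < 0 then 0 else g (t + x) / (1 - G t))"

end

theory Submission
  imports Defs
begin

text \<open>For x > 0 the reversed hazard rate of the parallel system of used components is
  n f(t+x) / (F(t+x) - F(t)), and that of the used parallel system is
  n F(t+x)^(n-1) f(t+x) / (F(t+x)^n - F(t)^n). Their ratio is the geometric sum
  \<Sum>k<n. q^k with q = F(t) / F(t+x), which decreases in x because F is increasing.
  That both lifetimes have the stated densities rests on the substitution rule
  \<integral> n G^(n-1) g = G^n for the indefinite integral G of a nonnegative integrable g; since G
  need not be differentiable, it is proved by showing that the difference of the two sides has
  increments that are locally small relative to those of G.\<close>

lemma has_integral_pos_if_pos_interior:
  fixes f :: "real \<Rightarrow> real"
  assumes f: "(f has_integral I) {u..v}" and "u < v"
    and nonneg: "\<And>s. s \<in> {u..v} \<Longrightarrow> 0 \<le> f s"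
    and pos: "\<And>s. s \<in> {u<..<v} \<Longrightarrow> 0 < f s"
  shows "0 < I"
proof -
  have abs_int: "f absolutely_integrable_on {u..v}"
    using f nonneg nonnegative_absolutely_integrable_1 by blast
  have "I \<noteq> 0"
  proof
    assume "I = 0"
    then have "set_lebesgue_integral lebesgue {u..v} f = 0"
      using f set_lebesgue_integral_eq_integral(2)[OF abs_int] by (simp add: integral_unique)
    then have "AE s in lebesgue. indicator {u..v} s *\<^sub>R f s = 0"
      unfolding set_lebesgue_integral_def
      by (subst (asm) integral_nonneg_eq_0_iff_AE)
         (use abs_int nonneg in \<open>auto simp: set_integrable_def indicator_def\<close>)
    then obtain N where N: "N \<in> null_sets lebesgue"
      "{s \<in> space lebesgue. indicator {u..v} s *\<^sub>R f s \<noteq> 0} \<subseteq> N"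
      by (rule AE_E) blast
    have "{u<..<v} \<subseteq> N"
      using N(2) pos by (force simp: indicator_def)
    then have "{u<..<v} \<in> null_sets lebesgue"
      using null_sets_subset[OF N(1)] by simp
    then have "emeasure lebesgue {u<..<v} = 0"
      by auto
    then show False using \<open>u < v\<close> by simp
  qed
  moreover have "0 \<le> I"
    using f nonneg by (rule has_integral_nonneg)
  ultimately show ?thesis by simp
qed

lemma increment_bound_if_local:
  fixes D G :: "real \<Rightarrow> real"
  assumes "a \<le> b"
    and dominated: "\<And>c. c \<in> {a..b} \<Longrightarrow> \<exists>\<eta>>0. \<forall>u\<in>{a..b}. \<forall>v\<in>{a..b}.
               \<bar>u - c\<bar> < \<eta> \<longrightarrow> \<bar>v - c\<bar> < \<eta> \<longrightarrow> u \<le> v \<longrightarrow> \<bar>D v - D u\<bar> \<le> G v - G u"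
  shows "\<bar>D b - D a\<bar> \<le> G b - G a"
proof -
  \<comment> \<open>Bolzano's local hypothesis concerns all small intervals around c, hence the guard\<close>
  have "a \<le> a \<longrightarrow> b \<le> b \<longrightarrow> \<bar>D b - D a\<bar> \<le> G b - G a"
    using \<open>a \<le> b\<close>
  proof (induction rule: Bolzano[where P = "\<lambda>x y. a \<le> x \<longrightarrow> y \<le> b \<longrightarrow> \<bar>D y - D x\<bar> \<le> G y - G x"])
    case (trans x y z)
    then show ?case
      by auto
  next
    case (local c)
    then obtain \<eta> where "\<eta> > 0" and \<eta>: "\<forall>u\<in>{a..b}. \<forall>v\<in>{a..b}.
        \<bar>u - c\<bar> < \<eta> \<longrightarrow> \<bar>v - c\<bar> < \<eta> \<longrightarrow> u \<le> v \<longrightarrow> \<bar>D v - D u\<bar> \<le> G v - G u"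
      using dominated[of c] by auto
    show ?case
    proof (intro exI[of _ \<eta>] conjI allI impI \<open>\<eta> > 0\<close>)
      fix u v assume "u \<le> c \<and> c \<le> v \<and> v - u < \<eta>" "a \<le> u" "v \<le> b"
      then show "\<bar>D v - D u\<bar> \<le> G v - G u"
        using \<eta> local by auto
    qed
  qed
  then show ?thesis
    by simp
qed

lemma eq_if_locally_dominated_increments:
  fixes D G :: "real \<Rightarrow> real"
  assumes "a \<le> b"
    and dominated: "\<And>c \<epsilon>. c \<in> {a..b} \<Longrightarrow> 0 < \<epsilon> \<Longrightarrow> \<exists>\<eta>>0. \<forall>u\<in>{a..b}. \<forall>v\<in>{a..b}.
               \<bar>u - c\<bar> < \<eta> \<longrightarrow> \<bar>v - c\<bar> < \<eta> \<longrightarrow> u \<le> v \<longrightarrow> \<bar>D v - D u\<bar> \<le> \<epsilon> * (G v - G u)"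
  shows "D b = D a"
proof -
  have bound: "\<bar>D b - D a\<bar> \<le> \<epsilon> * (G b - G a)" if "0 < \<epsilon>" for \<epsilon>
    using increment_bound_if_local[OF \<open>a \<le> b\<close>, of D "\<lambda>x. \<epsilon> * G x"] dominated[OF _ that]
    by (simp add: right_diff_distrib)
  define K where "K = G b - G a"
  have "0 \<le> K"
    using bound[of 1] by (simp add: K_def)
  have small: "\<bar>D b - D a\<bar> \<le> e" if "0 < e" for e
  proof -
    have "\<bar>D b - D a\<bar> \<le> e / (K + 1) * K"
      using bound[of "e / (K + 1)"] \<open>0 \<le> K\<close> \<open>0 < e\<close> by (simp add: K_def)
    also have "\<dots> \<le> e"
      using \<open>0 \<le> K\<close> \<open>0 < e\<close> by (simp add: field_simps)
    finally show ?thesis .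
  qed
  have "\<bar>D b - D a\<bar> \<le> 0"
    by (rule field_le_epsilon) (simp add: small)
  then show ?thesis
    by simp
qed

lemma MVT_increment_bound:
  fixes \<phi> \<phi>' :: "real \<Rightarrow> real"
  assumes "x \<le> y"
    and \<phi>: "\<And>\<xi>. \<xi> \<in> {x..y} \<Longrightarrow> (\<phi> has_real_derivative \<phi>' \<xi>) (at \<xi>)"
    and near: "\<And>\<xi>. \<xi> \<in> {x..y} \<Longrightarrow> \<bar>\<phi>' \<xi> - d\<bar> \<le> \<epsilon>"
  shows "\<bar>\<phi> y - \<phi> x - d * (y - x)\<bar> \<le> \<epsilon> * (y - x)"
proof (cases "x = y")
  case False
  then obtain \<xi> where \<xi>: "x < \<xi>" "\<xi> < y" and eq: "\<phi> y - \<phi> x = (y - x) * \<phi>' \<xi>"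
    using MVT2[of x y \<phi> \<phi>'] \<phi> \<open>x \<le> y\<close> by force
  have "\<phi> y - \<phi> x - d * (y - x) = (\<phi>' \<xi> - d) * (y - x)"
    by (simp add: eq algebra_simps)
  then have "\<bar>\<phi> y - \<phi> x - d * (y - x)\<bar> = \<bar>\<phi>' \<xi> - d\<bar> * (y - x)"
    using \<open>x \<le> y\<close> by (simp add: abs_mult)
  also have "\<dots> \<le> \<epsilon> * (y - x)"
    using near[of \<xi>] \<xi> \<open>x \<le> y\<close> by (intro mult_right_mono) auto
  finally show ?thesis .
qed simp

lemma integral_subst_increment_bound:
  fixes h H \<phi> \<phi>' :: "real \<Rightarrow> real"
  assumes "u \<le> v"
    and h_nonneg: "\<And>s. s \<in> {u..v} \<Longrightarrow> 0 \<le> h s"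
    and h: "(h has_integral (H v - H u)) {u..v}"
    and H_cont: "continuous_on {u..v} H"
    and \<phi>: "\<And>y. (\<phi> has_real_derivative \<phi>' y) (at y)"
    and J: "((\<lambda>s. \<phi>' (H s) * h s) has_integral J) {u..v}"
    and near: "\<And>s. s \<in> {u..v} \<Longrightarrow> \<bar>\<phi>' (H s) - d\<bar> \<le> \<epsilon>"
  shows "\<bar>J - (\<phi> (H v) - \<phi> (H u))\<bar> \<le> 2 * \<epsilon> * (H v - H u)"
proof -
  have "(d - \<epsilon>) * (H v - H u) \<le> J"
    using has_integral_mult_right[OF h, of "d - \<epsilon>"] J
  proof (rule has_integral_le)
    show "(d - \<epsilon>) * h s \<le> \<phi>' (H s) * h s" if "s \<in> {u..v}" for s
      using near[OF that] h_nonneg[OF that] by (intro mult_right_mono) auto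
  qed
  moreover have "J \<le> (d + \<epsilon>) * (H v - H u)"
    using J has_integral_mult_right[OF h, of "d + \<epsilon>"]
  proof (rule has_integral_le)
    show "\<phi>' (H s) * h s \<le> (d + \<epsilon>) * h s" if "s \<in> {u..v}" for s
      using near[OF that] h_nonneg[OF that] by (intro mult_right_mono) auto
  qed
  moreover have "\<bar>\<phi> (H v) - \<phi> (H u) - d * (H v - H u)\<bar> \<le> \<epsilon> * (H v - H u)"
  proof (rule MVT_increment_bound)
    show "H u \<le> H v"
      using has_integral_nonneg[OF h h_nonneg] by simp
    show "\<bar>\<phi>' \<xi> - d\<bar> \<le> \<epsilon>" if "\<xi> \<in> {H u..H v}" for \<xi>
      using IVT'[of H u \<xi> v] that \<open>u \<le> v\<close> H_cont near by force
  qed (rule \<phi>)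
  ultimately show ?thesis
    by (simp add: abs_le_iff algebra_simps)
qed

lemma has_integral_indefinite_integral_subinterval:
  fixes h H :: "real \<Rightarrow> real"
  assumes H: "\<And>s. s \<in> {a..b} \<Longrightarrow> (h has_integral (H s - H a)) {a..s}"
    and "a \<le> u" "u \<le> v" "v \<le> b"
  shows "(h has_integral (H v - H u)) {u..v}"
proof -
  have "h integrable_on {a..v}"
    using has_integral_integrable[OF H[of v]] assms(2-4) by simp
  then have I: "(h has_integral integral {u..v} h) {u..v}"
    using integrable_on_subinterval[of h "{a..v}" u v] assms(2-4) by (simp add: integrable_integral)
  then have "(h has_integral (H u - H a + integral {u..v} h)) {a..v}"
    using has_integral_combine[OF assms(2,3) H[of u]] assms(2-4) by simp
  moreover have "(h has_integral (H v - H a)) {a..v}"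
    using H[of v] assms(2-4) by simp
  ultimately have "H u - H a + integral {u..v} h = H v - H a"
    by (rule has_integral_unique)
  then have "integral {u..v} h = H v - H u"
    by simp
  then show ?thesis
    using I by simp
qed

lemma continuous_on_indefinite_integral:
  fixes h H :: "real \<Rightarrow> real"
  assumes H: "\<And>s. s \<in> {a..b} \<Longrightarrow> (h has_integral (H s - H a)) {a..s}" and "a \<le> b"
  shows "continuous_on {a..b} H"
proof -
  have "h integrable_on {a..b}"
    using has_integral_integrable[OF H[of b]] \<open>a \<le> b\<close> by simp
  then have "continuous_on {a..b} (\<lambda>s. H a + integral {a..s} h)"
    by (intro continuous_on_add continuous_on_const indefinite_integral_continuous_1)
  moreover have "H a + integral {a..s} h = H s" if "s \<in> {a..b}" for s
    using integral_unique[OF H[OF that]] by simp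
  ultimately show ?thesis
    by (rule continuous_on_eq)
qed

lemma absolutely_integrable_continuous_mult_Icc:
  fixes k h :: "real \<Rightarrow> real"
  assumes "continuous_on {a..b} k" and "h absolutely_integrable_on {a..b}"
  shows "(\<lambda>s. k s * h s) absolutely_integrable_on {a..b}"
proof (rule absolutely_integrable_bounded_measurable_product_real)
  show "k \<in> borel_measurable (lebesgue_on {a..b})"
    using assms(1) by (rule continuous_imp_measurable_on_sets_lebesgue) simp
  show "bounded (k ` {a..b})"
    using assms(1) by (intro compact_imp_bounded compact_continuous_image compact_Icc)
qed (use assms(2) in simp_all)

lemma integral_subst_local_bound:
  fixes h H \<phi> \<phi>' :: "real \<Rightarrow> real"
  assumes h_nonneg: "\<And>s. s \<in> {a..b} \<Longrightarrow> 0 \<le> h s"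
    and H: "\<And>s. s \<in> {a..b} \<Longrightarrow> (h has_integral (H s - H a)) {a..s}"
    and \<phi>: "\<And>y. (\<phi> has_real_derivative \<phi>' y) (at y)"
    and \<phi>'_cont: "continuous_on UNIV \<phi>'"
    and c: "c \<in> {a..b}" and "0 < \<epsilon>"
  obtains \<eta> where "\<eta> > 0"
    and "\<And>u v J. u \<in> {a..b} \<Longrightarrow> v \<in> {a..b} \<Longrightarrow> \<bar>u - c\<bar> < \<eta> \<Longrightarrow> \<bar>v - c\<bar> < \<eta> \<Longrightarrow> u \<le> v \<Longrightarrow>
           ((\<lambda>s. \<phi>' (H s) * h s) has_integral J) {u..v} \<Longrightarrow>
           \<bar>J - (\<phi> (H v) - \<phi> (H u))\<bar> \<le> \<epsilon> * (H v - H u)"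
proof -
  have H_cont: "continuous_on {a..b} H"
    using H c by (intro continuous_on_indefinite_integral) auto
  then have "continuous_on {a..b} (\<lambda>s. \<phi>' (H s))"
    using continuous_on_compose2[OF \<phi>'_cont] by blast
  then obtain \<eta> where "\<eta> > 0"
    and \<eta>: "\<And>s. s \<in> {a..b} \<Longrightarrow> dist s c < \<eta> \<Longrightarrow> dist (\<phi>' (H s)) (\<phi>' (H c)) < \<epsilon> / 2"
    using c \<open>0 < \<epsilon>\<close> unfolding continuous_on_iff by (metis half_gt_zero)
  show ?thesis
  proof (rule that[OF \<open>\<eta> > 0\<close>])
    fix u v J
    assume u: "u \<in> {a..b}" and v: "v \<in> {a..b}" and uc: "\<bar>u - c\<bar> < \<eta>" and vc: "\<bar>v - c\<bar> < \<eta>"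
      and "u \<le> v" and J: "((\<lambda>s. \<phi>' (H s) * h s) has_integral J) {u..v}"
    have "\<bar>J - (\<phi> (H v) - \<phi> (H u))\<bar> \<le> 2 * (\<epsilon> / 2) * (H v - H u)"
    proof (rule integral_subst_increment_bound[OF \<open>u \<le> v\<close> _ _ _ \<phi> J])
      show "\<bar>\<phi>' (H s) - \<phi>' (H c)\<bar> \<le> \<epsilon> / 2" if "s \<in> {u..v}" for s
      proof -
        have "\<bar>s - c\<bar> < \<eta>"
          using that uc vc by auto
        then show ?thesis
          using \<eta>[of s] that u v by (simp add: dist_real_def)
      qed
      show "continuous_on {u..v} H"
        using H_cont u v by (auto intro: continuous_on_subset)
      show "(h has_integral (H v - H u)) {u..v}"
        using u v \<open>u \<le> v\<close> by (intro has_integral_indefinite_integral_subinterval[OF H]) auto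
    qed (use h_nonneg u v in auto)
    then show "\<bar>J - (\<phi> (H v) - \<phi> (H u))\<bar> \<le> \<epsilon> * (H v - H u)"
      by simp
  qed
qed

lemma has_integral_substitution_indefinite_integral:
  fixes h H \<phi> \<phi>' :: "real \<Rightarrow> real"
  assumes "a \<le> b"
    and h_nonneg: "\<And>s. s \<in> {a..b} \<Longrightarrow> 0 \<le> h s"
    and H: "\<And>s. s \<in> {a..b} \<Longrightarrow> (h has_integral (H s - H a)) {a..s}"
    and \<phi>: "\<And>y. (\<phi> has_real_derivative \<phi>' y) (at y)"
    and \<phi>'_cont: "continuous_on UNIV \<phi>'"
  shows "((\<lambda>s. \<phi>' (H s) * h s) has_integral (\<phi> (H b) - \<phi> (H a))) {a..b}"
proof -
  define g where "g s = \<phi>' (H s) * h s" for s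
  then have g_eq: "(\<lambda>s. \<phi>' (H s) * h s) = g"
    by auto
  have "h absolutely_integrable_on {a..b}"
    using nonnegative_absolutely_integrable_1 H[of b] h_nonneg \<open>a \<le> b\<close> by force
  moreover have "continuous_on {a..b} (\<lambda>s. \<phi>' (H s))"
    using continuous_on_compose2[OF \<phi>'_cont continuous_on_indefinite_integral[OF H \<open>a \<le> b\<close>]]
    by blast
  ultimately have "g integrable_on {a..b}"
    unfolding g_def using absolutely_integrable_continuous_mult_Icc
    by (blast intro: set_lebesgue_integral_eq_integral(1))
  then have g_sub: "(g has_integral integral {u..v} g) {u..v}" if "a \<le> u" "v \<le> b" for u v
    using integrable_on_subinterval[of g "{a..b}" u v] that by (simp add: integrable_integral)
  \<comment> \<open>the remainder D has increments o(increments of H), hence is constant\<close>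
  define D where "D x = integral {a..x} g - \<phi> (H x)" for x
  have "D b = D a"
  proof (rule eq_if_locally_dominated_increments[OF \<open>a \<le> b\<close>])
    fix c \<epsilon> :: real assume c: "c \<in> {a..b}" and "0 < \<epsilon>"
    obtain \<eta> where "\<eta> > 0" and \<eta>: "\<And>u v J. u \<in> {a..b} \<Longrightarrow> v \<in> {a..b} \<Longrightarrow>
        \<bar>u - c\<bar> < \<eta> \<Longrightarrow> \<bar>v - c\<bar> < \<eta> \<Longrightarrow> u \<le> v \<Longrightarrow> (g has_integral J) {u..v} \<Longrightarrow>
        \<bar>J - (\<phi> (H v) - \<phi> (H u))\<bar> \<le> \<epsilon> * (H v - H u)"
      using integral_subst_local_bound[OF h_nonneg H \<phi> \<phi>'_cont c \<open>0 < \<epsilon>\<close>, unfolded g_eq] by blast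
    show "\<exists>\<eta>>0. \<forall>u\<in>{a..b}. \<forall>v\<in>{a..b}. \<bar>u - c\<bar> < \<eta> \<longrightarrow> \<bar>v - c\<bar> < \<eta> \<longrightarrow> u \<le> v \<longrightarrow>
        \<bar>D v - D u\<bar> \<le> \<epsilon> * (H v - H u)"
    proof (intro exI[of _ \<eta>] conjI ballI impI \<open>\<eta> > 0\<close>)
      fix u v assume "u \<in> {a..b}" "v \<in> {a..b}" "\<bar>u - c\<bar> < \<eta>" "\<bar>v - c\<bar> < \<eta>" "u \<le> v"
      moreover have "D v - D u = integral {u..v} g - (\<phi> (H v) - \<phi> (H u))"
        using Henstock_Kurzweil_Integration.integral_combine[where a=a and c=u and b=v and f=g]
          g_sub[of a v] \<open>u \<in> {a..b}\<close> \<open>v \<in> {a..b}\<close> \<open>u \<le> v\<close>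
        by (auto simp: D_def has_integral_integrable)
      ultimately show "\<bar>D v - D u\<bar> \<le> \<epsilon> * (H v - H u)"
        using \<eta> g_sub[of u v] by simp
    qed
  qed
  then have "integral {a..b} g = \<phi> (H b) - \<phi> (H a)"
    by (simp add: D_def)
  then show ?thesis
    using g_sub[of a b] by (simp add: g_eq)
qed

lemma is_density_has_integral_interval:
  assumes "is_density g G" and "u \<le> v"
  shows "(g has_integral (G v - G u)) {u..v}"
proof -
  have Gu: "(g has_integral G u) {..u}" and Gv: "(g has_integral G v) {..v}"
    using assms(1) by (auto simp: is_density_def)
  have I: "(g has_integral integral {u..v} g) {u..v}"
    using integrable_on_subinterval[OF has_integral_integrable[OF Gv]] by auto
  have "{..u} \<inter> {u..v} = {u}" "{..u} \<union> {u..v} = {..v}"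
    using \<open>u \<le> v\<close> by auto
  then have "(g has_integral (G u + integral {u..v} g)) {..v}"
    using has_integral_Un[OF Gu I] by simp
  then have "G u + integral {u..v} g = G v"
    using Gv by (rule has_integral_unique)
  then have "integral {u..v} g = G v - G u"
    by linarith
  then show ?thesis
    using I by simp
qed

lemma is_density_cdf_nonneg:
  assumes "is_density g G"
  shows "0 \<le> G x"
  using assms has_integral_nonneg[of g "G x" "{..x}"] by (auto simp: is_density_def)

lemma is_density_cdf_eq_0:
  assumes "is_density g G" and "\<And>x. x < 0 \<Longrightarrow> g x = 0" and "x \<le> 0"
  shows "G x = 0"
proof -
  have "(g has_integral G x) {..x}"
    using assms(1) by (simp add: is_density_def)
  moreover have "g s = 0" if "s \<in> {..x} - {0}" for s
    using that assms(2,3) by simp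
  ultimately have "((\<lambda>_. 0) has_integral G x) {..x}"
    using has_integral_spike[OF negligible_sing[of 0]] by (metis (no_types, lifting))
  then show ?thesis
    by simp
qed

lemma is_densityI_vanishing_neg:
  assumes nonneg: "\<And>x. 0 \<le> g x"
    and g_neg: "\<And>x. x < 0 \<Longrightarrow> g x = 0" and G_neg: "\<And>x. x < 0 \<Longrightarrow> G x = 0"
    and G: "\<And>x. 0 \<le> x \<Longrightarrow> (g has_integral G x) {0..x}"
  shows "is_density g G"
  unfolding is_density_def
proof (intro conjI allI nonneg)
  fix x :: real
  show "(g has_integral G x) {..x}"
  proof (cases "x < 0")
    case True
    then have "((\<lambda>_. 0) has_integral G x) {..x}"
      using G_neg by simp
    then show ?thesis
      by (rule has_integral_eq[rotated]) (use True g_neg in simp)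
  next
    case False
    have "((\<lambda>s. if s \<in> {0..x} then g s else 0) has_integral G x) {..x}"
      using has_integral_restrict[of "{0..x}" "{..x}" g "G x"] G[of x] False by auto
    moreover have "(if s \<in> {0..x} then g s else 0) = g s" if "s \<in> {..x}" for s
      using that g_neg by auto
    ultimately show ?thesis
      by (rule has_integral_eq[rotated])
  qed
qed

lemma is_density_par:
  assumes dens: "is_density g G" and g_neg: "\<And>x. x < 0 \<Longrightarrow> g x = 0" and "1 \<le> n"
  shows "is_density (par_pdf g G n) (par_cdf G n)"
proof (rule is_densityI_vanishing_neg)
  have G_nonneg: "0 \<le> G x" for x
    using dens by (rule is_density_cdf_nonneg)
  have G_0: "G x = 0" if "x \<le> 0" for x
    using dens g_neg that by (rule is_density_cdf_eq_0)
  show "0 \<le> par_pdf g G n x" for x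
    using dens G_nonneg by (simp add: par_pdf_def is_density_def)
  show "par_pdf g G n x = 0" if "x < 0" for x
    using g_neg that by (simp add: par_pdf_def)
  show "par_cdf G n x = 0" if "x < 0" for x
    using G_0 that \<open>1 \<le> n\<close> by (simp add: par_cdf_def)
  show "(par_pdf g G n has_integral par_cdf G n x) {0..x}" if "0 \<le> x" for x
  proof -
    have "((\<lambda>s. real n * G s ^ (n - 1) * g s) has_integral (G x ^ n - G 0 ^ n)) {0..x}"
    proof (rule has_integral_substitution_indefinite_integral[OF that])
      show "(g has_integral (G s - G 0)) {0..s}" if "s \<in> {0..x}" for s
        using dens that by (simp add: is_density_has_integral_interval)
      show "((\<lambda>y. y ^ n) has_real_derivative real n * y ^ (n - 1)) (at y)" for y
        using DERIV_pow[of n y] by simp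
    qed (use dens in \<open>auto simp: is_density_def intro!: continuous_intros\<close>)
    then show ?thesis
      using G_0[of 0] \<open>1 \<le> n\<close> by (simp add: par_pdf_def[abs_def] par_cdf_def power_0_left)
  qed
qed

lemma is_density_residual:
  assumes dens: "is_density g G" and "G t < 1"
  shows "is_density (residual_pdf g G t) (residual_cdf G t)"
proof (rule is_densityI_vanishing_neg)
  show "0 \<le> residual_pdf g G t x" for x
    using dens \<open>G t < 1\<close> by (simp add: residual_pdf_def is_density_def)
  show "residual_pdf g G t x = 0" "residual_cdf G t x = 0" if "x < 0" for x
    using that by (simp_all add: residual_pdf_def residual_cdf_def)
  show "(residual_pdf g G t has_integral residual_cdf G t x) {0..x}" if "0 \<le> x" for x
  proof -
    have "(g has_integral (G (t + x) - G t)) {t..t + x}"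
      using dens that by (simp add: is_density_has_integral_interval)
    then have "((\<lambda>s. g (t + s)) has_integral (G (t + x) - G t)) {0..x}"
      using has_integral_shift_Icc_real[of g t "G (t + x) - G t" 0 x] by (simp add: o_def add.commute)
    then have "((\<lambda>s. g (t + s) / (1 - G t)) has_integral residual_cdf G t x) {0..x}"
      using that by (simp add: residual_cdf_def has_integral_divide)
    then show ?thesis
      by (rule has_integral_eq[rotated]) (simp add: residual_pdf_def)
  qed
qed

lemma is_density_cdf_le:
  assumes "is_density g G" and "(g has_integral I) UNIV"
  shows "G x \<le> I"
  using assms by (intro has_integral_subset_le[of "{..x}" UNIV g]) (auto simp: is_density_def)

lemma is_density_cdf_strict_mono:
  assumes "is_density g G" and pos: "\<And>x. 0 < x \<Longrightarrow> 0 < g x" and "0 \<le> u" "u < v"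
  shows "G u < G v"
proof -
  have "0 < G v - G u"
  proof (rule has_integral_pos_if_pos_interior)
    show "(g has_integral (G v - G u)) {u..v}"
      using assms(1,4) by (simp add: is_density_has_integral_interval)
    show "0 \<le> g s" for s
      using assms(1) by (simp add: is_density_def)
    show "0 < g s" if "s \<in> {u<..<v}" for s
      using pos that \<open>0 \<le> u\<close> by simp
  qed fact
  then show ?thesis
    by simp
qed

lemma rhr_par:
  assumes "G x \<noteq> 0" and "1 \<le> n"
  shows "rhr (par_pdf g G n) (par_cdf G n) x = real n * rhr g G x"
proof -
  obtain m where "n = Suc m"
    using \<open>1 \<le> n\<close> by (cases n) auto
  then show ?thesis
    using \<open>G x \<noteq> 0\<close> by (simp add: rhr_def par_pdf_def par_cdf_def)
qed

lemma rhr_residual: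
  assumes "0 \<le> x" and "G t \<noteq> 1"
  shows "rhr (residual_pdf g G t) (residual_cdf G t) x = g (t + x) / (G (t + x) - G t)"
  using assms by (simp add: rhr_def residual_pdf_def residual_cdf_def)

lemma diff_power_div_eq_geometric_sum:
  fixes a b :: real
  assumes "0 < a" and "a \<noteq> b" and "1 \<le> n"
  shows "(a ^ n - b ^ n) / ((a - b) * a ^ (n - 1)) = (\<Sum>k<n. (b / a) ^ k)"
proof -
  obtain m where n: "n = Suc m"
    using \<open>1 \<le> n\<close> by (cases n) auto
  have "b / a \<noteq> 1"
    using assms by auto
  then have "(\<Sum>k<n. (b / a) ^ k) = (1 - (b / a) ^ n) / (1 - b / a)"
    by (metis sum_gp_strict)
  also have "\<dots> = (a ^ n - b ^ n) / ((a - b) * a ^ (n - 1))"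
    using assms by (simp add: n field_simps)
  finally show ?thesis ..
qed

lemma rhr_ratio_par_residual:
  fixes f F :: "real \<Rightarrow> real"
  assumes "0 \<le> x" and "0 \<le> F t" and "F t < F (t + x)" and "F t < 1"
    and "f (t + x) \<noteq> 0" and "1 \<le> n"
  shows "rhr (par_pdf (residual_pdf f F t) (residual_cdf F t) n) (par_cdf (residual_cdf F t) n) x /
         rhr (residual_pdf (par_pdf f F n) (par_cdf F n) t) (residual_cdf (par_cdf F n) t) x
       = (\<Sum>k<n. (F t / F (t + x)) ^ k)"
proof -
  have "residual_cdf F t x \<noteq> 0"
    using assms(1,3,4) by (simp add: residual_cdf_def)
  then have U: "rhr (par_pdf (residual_pdf f F t) (residual_cdf F t) n) (par_cdf (residual_cdf F t) n) x
      = real n * (f (t + x) / (F (t + x) - F t))"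
    using assms(1,4,6) by (simp add: rhr_par rhr_residual)
  have "par_cdf F n t \<noteq> 1"
    using assms(2,4,6) by (simp add: par_cdf_def power_less_one_iff less_imp_neq)
  then have V: "rhr (residual_pdf (par_pdf f F n) (par_cdf F n) t) (residual_cdf (par_cdf F n) t) x
      = real n * F (t + x) ^ (n - 1) * f (t + x) / (F (t + x) ^ n - F t ^ n)"
    using assms(1) by (simp add: rhr_residual par_pdf_def par_cdf_def)
  have "F (t + x) ^ n - F t ^ n \<noteq> 0"
    using assms(2,3,6) power_strict_mono[of "F t" "F (t + x)" n] by simp
  moreover have "F (t + x) ^ (n - 1) \<noteq> 0" "F (t + x) - F t \<noteq> 0"
    using assms(2,3) by auto
  ultimately have "real n * (f (t + x) / (F (t + x) - F t)) /
        (real n * F (t + x) ^ (n - 1) * f (t + x) / (F (t + x) ^ n - F t ^ n))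
      = (F (t + x) ^ n - F t ^ n) / ((F (t + x) - F t) * F (t + x) ^ (n - 1))"
    using assms(5,6) by (simp add: field_simps)
  also have "\<dots> = (\<Sum>k<n. (F t / F (t + x)) ^ k)"
    using assms(2,3,6) by (intro diff_power_div_eq_geometric_sum) auto
  finally show ?thesis
    unfolding U V .
qed

lemma rh_ratio_order_par_residual:
  fixes f F :: "real \<Rightarrow> real"
  assumes F_nonneg: "\<And>x. 0 \<le> F x"
    and F_less: "\<And>u v. 0 \<le> u \<Longrightarrow> u < v \<Longrightarrow> F u < F v"
    and "F t < 1" and pos: "\<And>x. 0 < x \<Longrightarrow> 0 < f x" and "0 \<le> t" and "1 \<le> n"
  shows "rh_ratio_order (par_pdf (residual_pdf f F t) (residual_cdf F t) n) (par_cdf (residual_cdf F t) n)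
           (residual_pdf (par_pdf f F n) (par_cdf F n) t) (residual_cdf (par_cdf F n) t)"
  unfolding rh_ratio_order_def
proof (intro allI impI)
  have ratio: "rhr (par_pdf (residual_pdf f F t) (residual_cdf F t) n) (par_cdf (residual_cdf F t) n) x /
      rhr (residual_pdf (par_pdf f F n) (par_cdf F n) t) (residual_cdf (par_cdf F n) t) x
      = (\<Sum>k<n. (F t / F (t + x)) ^ k)" if "0 < x" for x
    using F_nonneg F_less[of t "t + x"] \<open>F t < 1\<close> pos[of "t + x"] that \<open>0 \<le> t\<close> \<open>1 \<le> n\<close>
    by (intro rhr_ratio_par_residual) auto
  fix x y :: real
  assume "0 < x" "x \<le> y"
  then have "0 < y"
    by simp
  have "F (t + x) \<le> F (t + y)"
    using F_less[of "t + x" "t + y"] \<open>0 < x\<close> \<open>x \<le> y\<close> \<open>0 \<le> t\<close> by (cases "x = y") auto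
  moreover have "0 < F (t + x)"
    using F_nonneg[of t] F_less[of t "t + x"] \<open>0 < x\<close> \<open>0 \<le> t\<close> by simp
  ultimately have "F t / F (t + y) \<le> F t / F (t + x)"
    using F_nonneg[of t] by (intro divide_left_mono) auto
  then show "rhr (par_pdf (residual_pdf f F t) (residual_cdf F t) n) (par_cdf (residual_cdf F t) n) y /
      rhr (residual_pdf (par_pdf f F n) (par_cdf F n) t) (residual_cdf (par_cdf F n) t) y
    \<le> rhr (par_pdf (residual_pdf f F t) (residual_cdf F t) n) (par_cdf (residual_cdf F t) n) x /
      rhr (residual_pdf (par_pdf f F n) (par_cdf F n) t) (residual_cdf (par_cdf F n) t) x"
    unfolding ratio[OF \<open>0 < x\<close>] ratio[OF \<open>0 < y\<close>]
    using F_nonneg by (intro sum_mono power_mono) auto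
qed

theorem corollary5p2:
  fixes f F :: "real \<Rightarrow> real" and n :: nat and t :: real
  assumes dens: "is_density f F"
    and neg: "\<And>x. x < 0 \<Longrightarrow> f x = 0"
    and total: "(f has_integral 1) UNIV"
    and supp: "\<And>x. 0 < x \<Longrightarrow> 0 < f x"
    and n: "1 \<le> n"
    and t: "0 \<le> t"
  shows "is_density (par_pdf (residual_pdf f F t) (residual_cdf F t) n)
                    (par_cdf (residual_cdf F t) n)
       \<and> is_density (residual_pdf (par_pdf f F n) (par_cdf F n) t)
                    (residual_cdf (par_cdf F n) t)
       \<and> rh_ratio_order (par_pdf (residual_pdf f F t) (residual_cdf F t) n)
                        (par_cdf (residual_cdf F t) n)
                        (residual_pdf (par_pdf f F n) (par_cdf F n) t)
                        (residual_cdf (par_cdf F n) t)"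
proof -
  have F_nonneg: "0 \<le> F x" for x
    using dens by (rule is_density_cdf_nonneg)
  have F_less: "F u < F v" if "0 \<le> u" "u < v" for u v
    using dens supp that by (rule is_density_cdf_strict_mono)
  have "F t < 1"
    using F_less[of t "t + 1"] is_density_cdf_le[OF dens total, of "t + 1"] t by simp
  then have "par_cdf F n t < 1"
    using F_nonneg n by (simp add: par_cdf_def power_less_one_iff)
  have "is_density (residual_pdf f F t) (residual_cdf F t)"
    using dens \<open>F t < 1\<close> by (rule is_density_residual)
  then have "is_density (par_pdf (residual_pdf f F t) (residual_cdf F t) n) (par_cdf (residual_cdf F t) n)"
    using n by (intro is_density_par) (auto simp: residual_pdf_def)
  moreover have "is_density (residual_pdf (par_pdf f F n) (par_cdf F n) t) (residual_cdf (par_cdf F n) t)"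
    using is_density_par[OF dens neg n] \<open>par_cdf F n t < 1\<close> by (rule is_density_residual)
  moreover have "rh_ratio_order (par_pdf (residual_pdf f F t) (residual_cdf F t) n)
      (par_cdf (residual_cdf F t) n) (residual_pdf (par_pdf f F n) (par_cdf F n) t)
      (residual_cdf (par_cdf F n) t)"
    using F_nonneg F_less \<open>F t < 1\<close> supp t n by (rule rh_ratio_order_par_residual)
  ultimately show ?thesis
    by blast
qed

end
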